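(* Let $p$ be a random joint choice rule on a finite set $X$, with Möbius inverse $q$. A distribution $\nu\in\Delta(\mathcal{L}(X))$ and a transition function $t$ are a consumption dependent random utility representation of $p$, i.e. $$p(x,y,A,B)=\sum_{\succ\in N(x,A)}\sum_{\succ'\in N(y,B)}\nu(\succ)\,t_{\succ'}(x,\succ)\quad\text{for all } A,B\in\mathcal{X},\ (x,y)\in A\times B,$$ if and only if for all $A,B\in\mathcal{X}$ and all $(x,y)\in A\times B$, $$q(x,y,A,B)=\sum_{\succ\in I(x,A)}\sum_{\succ'\in I(y,B)}\nu(\succ)\,t_{\succ'}(x,\succ).$$
   Context: $X$ is finite, $\mathcal{X}$ the nonempty subsets of $X$, $\mathcal{L}(X)$ the linear orders on $X$. $N(x,A)=\{\succ: x\succ y\ \forall y\in A\setminus\{x\}\}$ and $I(x,A)=\{\succ : z\succ x\ \forall z\in X\setminus A,\ x\succ y\ \forall y\in A\setminus\{x\}\}$. A transition function is any map $t:X\times\mathcal{L}(X)\to\Delta(\mathcal{L}(X))$, with $t_{\succ'}(x,\succ)$ the probability of $\succ'$ under $t(x,\succ)$. A random joint choice rule assigns to each $A,B\in\mathcal{X}$ and $(x,y)\in A\times B$ a number $p(x,y,A,B)\ge 0$ with $\sum_{x\in A}\sum_{y\in B}p(x,y,A,B)=1$. Its Möbius inverse $q$ is the unique function with $p(x,y,A,B)=\sum_{A\subseteq A'\subseteq X}\sum_{B\subseteq B'\subseteq X}q(x,y,A',B')$ for all such $(x,y,A,B)$. *)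

theory Defs
  imports Main "HOL.Real"
begin

text \<open>The ground set X is the (finite) universe of the type 'a. A linear order on X is
  represented as a strict total order, i.e. a relation R with (x,y) in R meaning x is
  ranked above y.\<close>

definition lin_orders :: "('a \<times> 'a) set set" where
  "lin_orders = {R. irrefl R \<and> trans R \<and> (\<forall>x y. x \<noteq> y \<longrightarrow> (x, y) \<in> R \<or> (y, x) \<in> R)}"

definition N_set :: "'a \<Rightarrow> 'a set \<Rightarrow> ('a \<times> 'a) set set" where
  "N_set x A = {R \<in> lin_orders. \<forall>y \<in> A - {x}. (x, y) \<in> R}"

definition I_set :: "'a \<Rightarrow> 'a set \<Rightarrow> ('a \<times> 'a) set set" where
  "I_set x A = {R \<in> lin_orders. (\<forall>z \<in> - A. (z, x) \<in> R) \<and> (\<forall>y \<in> A - {x}. (x, y) \<in> R)}"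

definition is_distribution :: "(('a \<times> 'a) set \<Rightarrow> real) \<Rightarrow> bool" where
  "is_distribution \<nu> \<longleftrightarrow> (\<forall>R \<in> lin_orders. \<nu> R \<ge> 0) \<and> (\<Sum>R \<in> lin_orders. \<nu> R) = 1"

text \<open>t x R R' is the probability of R' under t(x,R).\<close>
definition is_transition :: "('a \<Rightarrow> ('a \<times> 'a) set \<Rightarrow> ('a \<times> 'a) set \<Rightarrow> real) \<Rightarrow> bool" where
  "is_transition t \<longleftrightarrow> (\<forall>x R. R \<in> lin_orders \<longrightarrow> is_distribution (t x R))"

definition is_rjcr :: "('a \<Rightarrow> 'a \<Rightarrow> 'a set \<Rightarrow> 'a set \<Rightarrow> real) \<Rightarrow> bool" where
  "is_rjcr p \<longleftrightarrow> (\<forall>A B. A \<noteq> {} \<longrightarrow> B \<noteq> {} \<longrightarrow>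
      (\<forall>x \<in> A. \<forall>y \<in> B. p x y A B \<ge> 0) \<and> (\<Sum>x \<in> A. \<Sum>y \<in> B. p x y A B) = 1)"

definition is_moebius_inverse ::
    "('a \<Rightarrow> 'a \<Rightarrow> 'a set \<Rightarrow> 'a set \<Rightarrow> real) \<Rightarrow> ('a \<Rightarrow> 'a \<Rightarrow> 'a set \<Rightarrow> 'a set \<Rightarrow> real) \<Rightarrow> bool" where
  "is_moebius_inverse q p \<longleftrightarrow> (\<forall>A B x y. A \<noteq> {} \<longrightarrow> B \<noteq> {} \<longrightarrow> x \<in> A \<longrightarrow> y \<in> B \<longrightarrow>
      p x y A B = (\<Sum>A' \<in> {A'. A \<subseteq> A'}. \<Sum>B' \<in> {B'. B \<subseteq> B'}. q x y A' B'))"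

end

theory Submission
  imports Defs
begin

text \<open>An order \<open>R \<in> N(x,A)\<close> lies in \<open>I(x,A')\<close> for exactly one set, namely
  \<open>A' = {x} \<union> {z. x \<succ> z}\<close>, and this set contains \<open>A\<close>. So \<open>N(x,A)\<close> is the disjoint union of
  the sets \<open>I(x,A')\<close> over \<open>A' \<supseteq> A\<close>, and the right-hand side of the representation of
  \<open>p\<close> is the double upward sum of the right-hand side of the formula for \<open>q\<close>. The two
  formulas are then equivalent because double upward sums determine a function on the
  up-closed family of pairs \<open>(A,B)\<close> with \<open>x \<in> A\<close> and \<open>y \<in> B\<close>.\<close>

lemma I_set_iff: "R \<in> I_set x A \<longleftrightarrow> R \<in> lin_orders \<and> A = insert x {z. (x, z) \<in> R}"
proof
  assume "R \<in> I_set x A"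
  then have R: "R \<in> lin_orders" and above: "\<forall>z \<in> - A. (z, x) \<in> R"
    and below: "\<forall>y \<in> A - {x}. (x, y) \<in> R"
    by (auto simp: I_set_def)
  from R have irr: "\<And>a. (a, a) \<notin> R" and "trans R"
    by (auto simp: lin_orders_def irrefl_def)
  have "x \<in> A"
    using above irr by blast
  moreover have "z \<in> A" if "(x, z) \<in> R" for z
  proof (rule ccontr)
    assume "z \<notin> A"
    then have "(z, x) \<in> R"
      using above by blast
    with that \<open>trans R\<close> irr show False
      by (meson transD)
  qed
  ultimately show "R \<in> lin_orders \<and> A = insert x {z. (x, z) \<in> R}"
    using R below by blast
next
  assume "R \<in> lin_orders \<and> A = insert x {z. (x, z) \<in> R}"
  then show "R \<in> I_set x A"
    by (auto simp: I_set_def lin_orders_def)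
qed

lemma N_set_eq_UN_I_set:
  assumes "x \<in> A"
  shows "N_set x A = (\<Union>A' \<in> {A'. A \<subseteq> A'}. I_set x A')"
proof (intro set_eqI iffI)
  fix R
  assume "R \<in> N_set x A"
  then have "R \<in> I_set x (insert x {z. (x, z) \<in> R})" and "A \<subseteq> insert x {z. (x, z) \<in> R}"
    by (auto simp: N_set_def I_set_iff)
  then show "R \<in> (\<Union>A' \<in> {A'. A \<subseteq> A'}. I_set x A')"
    by blast
next
  fix R
  assume "R \<in> (\<Union>A' \<in> {A'. A \<subseteq> A'}. I_set x A')"
  then show "R \<in> N_set x A"
    by (auto simp: N_set_def I_set_iff)
qed

lemma sum_N_set:
  fixes h :: "('a::finite \<times> 'a) set \<Rightarrow> 'b::comm_monoid_add"
  assumes "x \<in> A"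
  shows "(\<Sum>R \<in> N_set x A. h R) = (\<Sum>A' \<in> {A'. A \<subseteq> A'}. \<Sum>R \<in> I_set x A'. h R)"
  unfolding N_set_eq_UN_I_set[OF assms]
  by (rule sum.UNION_disjoint) (auto simp: I_set_iff)

lemma sum_N_set_N_set:
  fixes F :: "('a::finite \<times> 'a) set \<Rightarrow> ('a \<times> 'a) set \<Rightarrow> 'b::comm_monoid_add"
  assumes "x \<in> A" and "y \<in> B"
  shows "(\<Sum>R \<in> N_set x A. \<Sum>R' \<in> N_set y B. F R R') =
    (\<Sum>A' \<in> {A'. A \<subseteq> A'}. \<Sum>B' \<in> {B'. B \<subseteq> B'}. \<Sum>R \<in> I_set x A'. \<Sum>R' \<in> I_set y B'. F R R')"
proof -
  have "(\<Sum>R \<in> N_set x A. \<Sum>R' \<in> N_set y B. F R R') =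
      (\<Sum>A' \<in> {A'. A \<subseteq> A'}. \<Sum>R \<in> I_set x A'. \<Sum>B' \<in> {B'. B \<subseteq> B'}. \<Sum>R' \<in> I_set y B'. F R R')"
    by (simp add: sum_N_set[OF assms(2)] sum_N_set[OF assms(1)])
  also have "\<dots> =
      (\<Sum>A' \<in> {A'. A \<subseteq> A'}. \<Sum>B' \<in> {B'. B \<subseteq> B'}. \<Sum>R \<in> I_set x A'. \<Sum>R' \<in> I_set y B'. F R R')"
    by (rule sum.cong[OF refl], rule sum.swap)
  finally show ?thesis .
qed

lemma superset_sums_eq_0_imp_eq_0:
  fixes g :: "'a::finite set \<Rightarrow> 'b::ab_group_add"
  assumes up_closed: "\<And>A A'. P A \<Longrightarrow> A \<subseteq> A' \<Longrightarrow> P A'"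
    and sums_0: "\<And>A. P A \<Longrightarrow> (\<Sum>A' \<in> {A'. A \<subseteq> A'}. g A') = 0"
    and "P A"
  shows "g A = 0"
  using \<open>P A\<close>
proof (induction "card (- A)" arbitrary: A rule: less_induct)
  case less
  have "(\<Sum>A' \<in> {A'. A \<subset> A'}. g A') = 0"
  proof (rule sum.neutral, intro ballI)
    fix A'
    assume "A' \<in> {A'. A \<subset> A'}"
    then have "card (- A') < card (- A)" and "P A'"
      using up_closed[OF less.prems] by (auto intro: psubset_card_mono)
    then show "g A' = 0"
      by (rule less.hyps)
  qed
  moreover have "{A'. A \<subseteq> A'} = insert A {A'. A \<subset> A'}"
    by auto
  ultimately show "g A = 0"
    using sums_0[OF less.prems] by simp
qed

lemma superset_sums2_eq_imp_eq:
  fixes f g :: "'a::finite set \<Rightarrow> 'b::finite set \<Rightarrow> 'c::ab_group_add"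
  assumes up_closed: "\<And>A A'. P A \<Longrightarrow> A \<subseteq> A' \<Longrightarrow> P A'" "\<And>B B'. Q B \<Longrightarrow> B \<subseteq> B' \<Longrightarrow> Q B'"
    and sums_eq: "\<And>A B. P A \<Longrightarrow> Q B \<Longrightarrow>
      (\<Sum>A' \<in> {A'. A \<subseteq> A'}. \<Sum>B' \<in> {B'. B \<subseteq> B'}. f A' B') =
      (\<Sum>A' \<in> {A'. A \<subseteq> A'}. \<Sum>B' \<in> {B'. B \<subseteq> B'}. g A' B')"
    and "P A" "Q B"
  shows "f A B = g A B"
proof -
  have inner_sums_0: "(\<Sum>B' \<in> {B'. B \<subseteq> B'}. f A B' - g A B') = 0"
    if "P A" "Q B" for A B
  proof (rule superset_sums_eq_0_imp_eq_0[where P = P, OF up_closed(1) _ \<open>P A\<close>])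
    fix A0
    assume "P A0"
    show "(\<Sum>A' \<in> {A'. A0 \<subseteq> A'}. \<Sum>B' \<in> {B'. B \<subseteq> B'}. f A' B' - g A' B') = 0"
      using sums_eq[OF \<open>P A0\<close> \<open>Q B\<close>] by (simp add: sum_subtractf)
  qed
  have "f A B - g A B = 0"
    by (rule superset_sums_eq_0_imp_eq_0[where P = Q, OF up_closed(2) inner_sums_0[OF \<open>P A\<close>] \<open>Q B\<close>])
  then show ?thesis
    by simp
qed

lemma superset_sums2_representation_iff:
  fixes p q r :: "'a \<Rightarrow> 'b \<Rightarrow> 'a::finite set \<Rightarrow> 'b::finite set \<Rightarrow> 'c::ab_group_add"
  assumes p_eq: "\<And>x y A B. x \<in> A \<Longrightarrow> y \<in> B \<Longrightarrow>
    p x y A B = (\<Sum>A' \<in> {A'. A \<subseteq> A'}. \<Sum>B' \<in> {B'. B \<subseteq> B'}. q x y A' B')"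
  shows "(\<forall>A B x y. x \<in> A \<longrightarrow> y \<in> B \<longrightarrow>
      p x y A B = (\<Sum>A' \<in> {A'. A \<subseteq> A'}. \<Sum>B' \<in> {B'. B \<subseteq> B'}. r x y A' B'))
    \<longleftrightarrow> (\<forall>A B x y. x \<in> A \<longrightarrow> y \<in> B \<longrightarrow> q x y A B = r x y A B)"
proof (intro iffI allI impI)
  fix A B and x :: 'a and y :: 'b
  assume rep: "\<forall>A B x y. x \<in> A \<longrightarrow> y \<in> B \<longrightarrow>
      p x y A B = (\<Sum>A' \<in> {A'. A \<subseteq> A'}. \<Sum>B' \<in> {B'. B \<subseteq> B'}. r x y A' B')"
    and "x \<in> A" "y \<in> B"
  have sums_eq: "(\<Sum>A' \<in> {A'. A0 \<subseteq> A'}. \<Sum>B' \<in> {B'. B0 \<subseteq> B'}. q x y A' B') =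
      (\<Sum>A' \<in> {A'. A0 \<subseteq> A'}. \<Sum>B' \<in> {B'. B0 \<subseteq> B'}. r x y A' B')"
    if "x \<in> A0" "y \<in> B0" for A0 B0
    using rep p_eq[OF that] that by simp
  show "q x y A B = r x y A B"
    using \<open>x \<in> A\<close> \<open>y \<in> B\<close>
    by (intro superset_sums2_eq_imp_eq[where P = "\<lambda>A. x \<in> A" and Q = "\<lambda>B. y \<in> B", OF _ _ sums_eq])
      auto
next
  fix A B and x :: 'a and y :: 'b
  assume "\<forall>A B x y. x \<in> A \<longrightarrow> y \<in> B \<longrightarrow> q x y A B = r x y A B" and "x \<in> A" "y \<in> B"
  then show "p x y A B = (\<Sum>A' \<in> {A'. A \<subseteq> A'}. \<Sum>B' \<in> {B'. B \<subseteq> B'}. r x y A' B')"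
    unfolding p_eq[OF \<open>x \<in> A\<close> \<open>y \<in> B\<close>] by (intro sum.cong refl) blast
qed

theorem theorem4:
  fixes p q :: "'a::finite \<Rightarrow> 'a \<Rightarrow> 'a set \<Rightarrow> 'a set \<Rightarrow> real"
    and \<nu> :: "('a \<times> 'a) set \<Rightarrow> real"
    and t :: "'a \<Rightarrow> ('a \<times> 'a) set \<Rightarrow> ('a \<times> 'a) set \<Rightarrow> real"
  assumes "is_rjcr p"
    and "is_moebius_inverse q p"
    and "is_distribution \<nu>"
    and "is_transition t"
  shows "(\<forall>A B x y. A \<noteq> {} \<longrightarrow> B \<noteq> {} \<longrightarrow> x \<in> A \<longrightarrow> y \<in> B \<longrightarrow>
            p x y A B = (\<Sum>R \<in> N_set x A. \<Sum>R' \<in> N_set y B. \<nu> R * t x R R'))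
     \<longleftrightarrow> (\<forall>A B x y. A \<noteq> {} \<longrightarrow> B \<noteq> {} \<longrightarrow> x \<in> A \<longrightarrow> y \<in> B \<longrightarrow>
            q x y A B = (\<Sum>R \<in> I_set x A. \<Sum>R' \<in> I_set y B. \<nu> R * t x R R'))"
proof -
  let ?I = "\<lambda>x y A B. \<Sum>R \<in> I_set x A. \<Sum>R' \<in> I_set y B. \<nu> R * t x R R'"
  have p_eq: "p x y A B = (\<Sum>A' \<in> {A'. A \<subseteq> A'}. \<Sum>B' \<in> {B'. B \<subseteq> B'}. q x y A' B')"
    if "x \<in> A" "y \<in> B" for x y A B
    using assms(2) that unfolding is_moebius_inverse_def by blast
  have "(\<forall>A B x y. A \<noteq> {} \<longrightarrow> B \<noteq> {} \<longrightarrow> x \<in> A \<longrightarrow> y \<in> B \<longrightarrow>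
            p x y A B = (\<Sum>R \<in> N_set x A. \<Sum>R' \<in> N_set y B. \<nu> R * t x R R'))
     \<longleftrightarrow> (\<forall>A B x y. x \<in> A \<longrightarrow> y \<in> B \<longrightarrow>
            p x y A B = (\<Sum>R \<in> N_set x A. \<Sum>R' \<in> N_set y B. \<nu> R * t x R R'))"
    by auto
  also have "\<dots> \<longleftrightarrow> (\<forall>A B x y. x \<in> A \<longrightarrow> y \<in> B \<longrightarrow>
            p x y A B = (\<Sum>A' \<in> {A'. A \<subseteq> A'}. \<Sum>B' \<in> {B'. B \<subseteq> B'}. ?I x y A' B'))"
    by (simp add: sum_N_set_N_set)
  also have "\<dots> \<longleftrightarrow> (\<forall>A B x y. x \<in> A \<longrightarrow> y \<in> B \<longrightarrow> q x y A B = ?I x y A B)"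
    by (rule superset_sums2_representation_iff[OF p_eq])
  finally show ?thesis
    by auto
qed

end
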